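(* Let $\mathcal{C}(\mathbb{R}) = \{A\subseteq\mathbb{R} : A \text{ is countable or } \mathbb{R}\setminus A \text{ is countable}\}$. Then $\mathcal{C}(\mathbb{R}) \neq \mathcal{B}_f(\mathbb{R})$ for every two-point selection $f$ on $\mathbb{R}$.
   Context: A two-point selection on $\mathbb{R}$ is a function $f$ from the set of two-element subsets of $\mathbb{R}$ to $\mathbb{R}$ with $f(F)\in F$. Write $r<_f s$ if $f(\{r,s\})=r$ ($r\ne s$), $(\leftarrow,r)_f=\{x: x<_f r\}$, $(r,\rightarrow)_f=\{x: r<_f x\}$. The topology $\tau_f$ on $\mathbb{R}$ is generated (as a subbase) by all sets $(\leftarrow,r)_f$, $(r,\rightarrow)_f$, $r\in\mathbb{R}$, and $\mathcal{B}_f(\mathbb{R})$ is the $\sigma$-algebra generated by $\tau_f$. *)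

theory Defs
  imports "HOL-Analysis.Analysis"
begin

definition two_point_selection :: "(real set \<Rightarrow> real) \<Rightarrow> bool" where
  "two_point_selection f \<longleftrightarrow> (\<forall>x y. x \<noteq> y \<longrightarrow> f {x, y} \<in> {x, y})"

definition sel_less :: "(real set \<Rightarrow> real) \<Rightarrow> real \<Rightarrow> real \<Rightarrow> bool" where
  "sel_less f r s \<longleftrightarrow> r \<noteq> s \<and> f {r, s} = r"

definition sel_subbase :: "(real set \<Rightarrow> real) \<Rightarrow> real set set" where
  "sel_subbase f = {{x. sel_less f x r} | r. True} \<union> {{x. sel_less f r x} | r. True}"

definition sel_topology :: "(real set \<Rightarrow> real) \<Rightarrow> real topology" where
  "sel_topology f = topology_generated_by (sel_subbase f)"

definition sel_borel :: "(real set \<Rightarrow> real) \<Rightarrow> real set set" where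
  "sel_borel f = sigma_sets UNIV {U. openin (sel_topology f) U}"

definition countable_cocountable :: "real set set" where
  "countable_cocountable = {A. countable A \<or> countable (UNIV - A)}"

end

(*
  The rays of the tournament <_f are open, and we find an open set U such that both U and its
  complement are uncountable; U belongs to B_f(R) but not to C(R).
  If uncountably many lower rays (<-,r)_f are countable, Zorn's lemma yields an uncountable
  set Z, well-ordered by <_f, in which every point has countably many predecessors.  The
  successors in Z are isolated by the open intervals (x, succ (succ x))_f, and the union of
  these intervals over one half of the uncountable set of successors is the desired U.
  Otherwise either some lower ray is already such a U, or uncountably many lower rays are
  co-countable, hence uncountably many upper rays are countable and the argument applies to
  the reversed tournament.
*)
theory Submission
  imports Defs
begin

lemma uncountable_split:
  includes cardinal_syntax
  assumes "uncountable P"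
  obtains P1 P2 where "P1 \<subseteq> P" "P2 \<subseteq> P" "P1 \<inter> P2 = {}" "uncountable P1" "uncountable P2"
proof -
  have "infinite P" using assms countable_finite by blast
  then have "|P \<times> P| \<le>o |P|"
    by (intro ordIso_imp_ordLeq card_of_Times_same_infinite)
  then obtain g where g: "inj_on g (P \<times> P)" "g ` (P \<times> P) \<subseteq> P"
    using card_of_ordLeq[of "P \<times> P" P] by auto
  obtain a where "a \<in> P"
    using assms by (metis countable_empty ex_in_conv)
  moreover obtain b where "b \<in> P - {a}"
    using uncountable_minus_countable[OF assms, of "{a}"]
    by (metis countable_empty countable_insert ex_in_conv)
  ultimately have ab: "a \<in> P" "b \<in> P" "a \<noteq> b" by auto
  have column: "uncountable (g ` (P \<times> {c}))" if "c \<in> P" for c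
  proof
    assume "countable (g ` (P \<times> {c}))"
    moreover have "inj_on g (P \<times> {c})" using g(1) by (rule inj_on_subset) (use that in blast)
    ultimately have "countable (fst ` (P \<times> {c}))" by (blast dest: countable_image_inj_on)
    then show False using assms by simp
  qed
  have "g (x, a) \<noteq> g (y, b)" if "x \<in> P" "y \<in> P" for x y
    using inj_on_eq_iff[OF g(1), of "(x, a)" "(y, b)"] that ab by auto
  then have disjoint: "g ` (P \<times> {a}) \<inter> g ` (P \<times> {b}) = {}" by blast
  have sub: "g ` (P \<times> {c}) \<subseteq> P" if "c \<in> P" for c
    using g(2) that by auto
  show thesis
    by (rule that[OF sub[OF ab(1)] sub[OF ab(2)] disjoint column[OF ab(1)] column[OF ab(2)]])
qed

lemma uncountable_isolated_imp_open_split: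
  assumes "uncountable D"
    and isolated: "\<And>d. d \<in> D \<Longrightarrow> \<exists>U. openin T U \<and> U \<inter> D = {d}"
  obtains U where "openin T U" "uncountable U" "uncountable (topspace T - U)"
proof -
  obtain V where V: "\<And>d. d \<in> D \<Longrightarrow> openin T (V d) \<and> V d \<inter> D = {d}"
    using isolated by metis
  obtain P1 P2 where P: "P1 \<subseteq> D" "P2 \<subseteq> D" "P1 \<inter> P2 = {}" "uncountable P1" "uncountable P2"
    using uncountable_split[OF \<open>uncountable D\<close>] by blast
  let ?U = "\<Union>d\<in>P1. V d"
  have "openin T ?U" using V P(1) by blast
  have "P1 \<subseteq> ?U" using V P(1) by blast
  have "P2 \<subseteq> topspace T - ?U"
  proof
    fix q assume "q \<in> P2"
    then have "q \<in> topspace T" using V P(2) openin_subset by blast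
    moreover have "q \<notin> V d" if "d \<in> P1" for d
    proof
      assume "q \<in> V d"
      moreover have "q \<in> D" "d \<in> D" using \<open>q \<in> P2\<close> that P(1,2) by blast+
      ultimately have "q = d" using V[of d] by blast
      then show False using \<open>q \<in> P2\<close> that P(3) by blast
    qed
    ultimately show "q \<in> topspace T - ?U" by blast
  qed
  show thesis
  proof (rule that)
    show "openin T ?U" by fact
    show "uncountable ?U" using countable_subset[OF \<open>P1 \<subseteq> ?U\<close>] P(4) by blast
    show "uncountable (topspace T - ?U)"
      using countable_subset[OF \<open>P2 \<subseteq> topspace T - ?U\<close>] P(5) by blast
  qed
qed

locale tournament =
  fixes prec :: "'a \<Rightarrow> 'a \<Rightarrow> bool" (infix "\<lessdot>" 50)
  assumes total: "x \<noteq> y \<Longrightarrow> x \<lessdot> y \<or> y \<lessdot> x"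
    and asym: "x \<lessdot> y \<Longrightarrow> \<not> y \<lessdot> x"
begin

lemma irrefl: "\<not> x \<lessdot> x"
  using asym by blast

lemma dual: "tournament (\<lambda>x y. y \<lessdot> x)"
  by unfold_locales (use total asym in blast)+

definition well_ordered :: "'a set \<Rightarrow> bool" where
  "well_ordered Z \<longleftrightarrow> (\<forall>T\<subseteq>Z. T \<noteq> {} \<longrightarrow> (\<exists>m\<in>T. \<forall>t\<in>T. \<not> t \<lessdot> m))"

definition initial_segment :: "'a set \<Rightarrow> 'a set \<Rightarrow> bool" where
  "initial_segment Y Z \<longleftrightarrow> Y \<subseteq> Z \<and> (\<forall>y\<in>Y. \<forall>z\<in>Z. z \<lessdot> y \<longrightarrow> z \<in> Y)"

lemma well_orderedE:
  assumes "well_ordered Z" "T \<subseteq> Z" "T \<noteq> {}"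
  obtains m where "m \<in> T" "\<And>t. t \<in> T \<Longrightarrow> \<not> t \<lessdot> m"
  using assms unfolding well_ordered_def by meson

lemma well_ordered_least:
  assumes "well_ordered Z" "T \<subseteq> Z" "T \<noteq> {}"
  obtains m where "m \<in> T" "\<And>t. t \<in> T \<Longrightarrow> t \<noteq> m \<Longrightarrow> m \<lessdot> t"
proof -
  obtain m where m: "m \<in> T" "\<And>t. t \<in> T \<Longrightarrow> \<not> t \<lessdot> m"
    using assms by (rule well_orderedE) blast
  have "m \<lessdot> t" if "t \<in> T" "t \<noteq> m" for t
    using total[OF that(2)] m(2)[OF that(1)] by blast
  with m(1) show thesis by (rule that)
qed

lemma well_ordered_Union_chain:
  assumes "\<And>Z. Z \<in> C \<Longrightarrow> well_ordered Z"
    and chain: "\<And>Y Z. Y \<in> C \<Longrightarrow> Z \<in> C \<Longrightarrow> initial_segment Y Z \<or> initial_segment Z Y"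
  shows "well_ordered (\<Union>C)" and "\<And>Z. Z \<in> C \<Longrightarrow> initial_segment Z (\<Union>C)"
proof -
  have segment: "z \<in> Z" if Zy: "Z \<in> C" "y \<in> Z" and z: "z \<in> \<Union>C" "z \<lessdot> y" for Z y z
  proof -
    obtain Z' where "Z' \<in> C" "z \<in> Z'" using z(1) by blast
    then show ?thesis
      using chain[of Z Z'] Zy z(2) unfolding initial_segment_def by blast
  qed
  then show "\<And>Z. Z \<in> C \<Longrightarrow> initial_segment Z (\<Union>C)"
    unfolding initial_segment_def by blast
  show "well_ordered (\<Union>C)"
    unfolding well_ordered_def
  proof (intro allI impI)
    fix T assume "T \<subseteq> \<Union>C" "T \<noteq> {}"
    then obtain Z t where "Z \<in> C" "t \<in> T \<inter> Z" by blast
    obtain m where m: "m \<in> T \<inter> Z" "\<And>t. t \<in> T \<inter> Z \<Longrightarrow> \<not> t \<lessdot> m"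
      by (rule well_orderedE[OF assms(1)[OF \<open>Z \<in> C\<close>], of "T \<inter> Z"])
        (use \<open>t \<in> T \<inter> Z\<close> in auto)
    have "\<not> t \<lessdot> m" if "t \<in> T" for t
      using segment[OF \<open>Z \<in> C\<close>, of m t] m that \<open>T \<subseteq> \<Union>C\<close> by blast
    then show "\<exists>m\<in>T. \<forall>t\<in>T. \<not> t \<lessdot> m" using m(1) by blast
  qed
qed

lemma well_ordered_insert_top:
  assumes "well_ordered Z" "\<And>s. s \<in> Z \<Longrightarrow> s \<lessdot> z"
  shows "well_ordered (insert z Z)" and "initial_segment Z (insert z Z)"
proof -
  show "initial_segment Z (insert z Z)"
    using assms(2) asym unfolding initial_segment_def by blast
  show "well_ordered (insert z Z)"
    unfolding well_ordered_def
  proof (intro allI impI)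
    fix T assume T: "T \<subseteq> insert z Z" "T \<noteq> {}"
    show "\<exists>m\<in>T. \<forall>t\<in>T. \<not> t \<lessdot> m"
    proof (cases "T \<inter> Z = {}")
      case True
      then have "T = {z}" using T by blast
      then show ?thesis using irrefl by blast
    next
      case False
      obtain m where "m \<in> T \<inter> Z" "\<And>t. t \<in> T \<inter> Z \<Longrightarrow> \<not> t \<lessdot> m"
        by (rule well_orderedE[OF assms(1), of "T \<inter> Z"]) (use False in auto)
      then show ?thesis using T assms(2) asym by blast
    qed
  qed
qed

lemma exists_maximal_well_ordered:
  obtains Z where "Z \<subseteq> A" "well_ordered Z"
    "\<And>Z'. Z' \<subseteq> A \<Longrightarrow> well_ordered Z' \<Longrightarrow> initial_segment Z Z' \<Longrightarrow> Z' = Z"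
proof -
  let ?F = "{Z. Z \<subseteq> A \<and> well_ordered Z}"
  have "partial_order_on ?F (relation_of initial_segment ?F)"
    by (rule partial_order_on_relation_ofI) (auto simp: initial_segment_def)
  moreover have "\<exists>U\<in>?F. \<forall>Z\<in>C. initial_segment Z U"
    if "C \<in> Chains (relation_of initial_segment ?F)" for C
  proof -
    have CF: "C \<subseteq> ?F"
      and chain: "\<And>Y Z. Y \<in> C \<Longrightarrow> Z \<in> C \<Longrightarrow> initial_segment Y Z \<or> initial_segment Z Y"
      using that unfolding Chains_def relation_of_def by auto
    have "\<And>Z. Z \<in> C \<Longrightarrow> well_ordered Z" using CF by blast
    note Union_chain = well_ordered_Union_chain[of C, OF this chain]
    have "\<Union>C \<subseteq> A" using CF by blast
    then have "\<Union>C \<in> ?F" using Union_chain(1) by simp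
    have "\<forall>Z\<in>C. initial_segment Z (\<Union>C)" using Union_chain(2) by blast
    from this \<open>\<Union>C \<in> ?F\<close> show ?thesis by (rule bexI)
  qed
  ultimately have "\<exists>Z\<in>?F. \<forall>Z'\<in>?F. initial_segment Z Z' \<longrightarrow> Z' = Z"
    by (rule predicate_Zorn)
  then show thesis using that by auto
qed

text \<open>The maximal well-ordered subset cannot be countable, since then a strict upper bound
  could be put on top of it.\<close>
lemma exists_uncountable_well_ordered:
  assumes bound: "\<And>S. countable S \<Longrightarrow> S \<subseteq> A \<Longrightarrow> \<exists>z\<in>A - S. \<forall>s\<in>S. s \<lessdot> z"
  obtains Z where "Z \<subseteq> A" "well_ordered Z" "uncountable Z"
proof -
  obtain Z where Z: "Z \<subseteq> A" "well_ordered Z"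
    and maximal: "\<And>Z'. Z' \<subseteq> A \<Longrightarrow> well_ordered Z' \<Longrightarrow> initial_segment Z Z' \<Longrightarrow> Z' = Z"
    using exists_maximal_well_ordered[of A] by metis
  have "uncountable Z"
  proof
    assume "countable Z"
    then obtain z where "z \<in> A - Z" "\<forall>s\<in>Z. s \<lessdot> z" using bound Z(1) by blast
    with Z well_ordered_insert_top[of Z z] have "insert z Z = Z"
      by (intro maximal) auto
    then show False using \<open>z \<in> A - Z\<close> by blast
  qed
  with Z that show thesis by blast
qed

lemma well_ordered_successor:
  assumes "well_ordered Z" and unbounded: "\<And>x. x \<in> Z \<Longrightarrow> \<exists>y\<in>Z. x \<lessdot> y"
  obtains succ where "\<And>x. x \<in> Z \<Longrightarrow> succ x \<in> Z" "\<And>x. x \<in> Z \<Longrightarrow> x \<lessdot> succ x"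
    "\<And>x t. x \<in> Z \<Longrightarrow> t \<in> Z \<Longrightarrow> x \<lessdot> t \<Longrightarrow> t = succ x \<or> succ x \<lessdot> t"
proof -
  have "\<exists>s\<in>Z. x \<lessdot> s \<and> (\<forall>t\<in>Z. x \<lessdot> t \<longrightarrow> t = s \<or> s \<lessdot> t)" if x: "x \<in> Z" for x
  proof -
    obtain s where "s \<in> {t\<in>Z. x \<lessdot> t}" "\<And>t. t \<in> {t\<in>Z. x \<lessdot> t} \<Longrightarrow> t \<noteq> s \<Longrightarrow> s \<lessdot> t"
      by (rule well_ordered_least[OF assms(1), of "{t\<in>Z. x \<lessdot> t}"])
        (use unbounded[OF x] in auto)
    then show ?thesis by blast
  qed
  then show thesis using that by metis
qed

text \<open>The successor of x is isolated by the interval between x and the successor of the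
  successor; the successors form an uncountable set because the successor map is injective.\<close>
lemma well_ordered_isolated_subset:
  assumes "well_ordered Z" "uncountable Z" and unbounded: "\<And>x. x \<in> Z \<Longrightarrow> \<exists>y\<in>Z. x \<lessdot> y"
  obtains D where "uncountable D"
    "\<And>d. d \<in> D \<Longrightarrow> \<exists>a b. a \<lessdot> d \<and> d \<lessdot> b \<and> (\<forall>y\<in>D. a \<lessdot> y \<and> y \<lessdot> b \<longrightarrow> y = d)"
proof -
  obtain succ where succ: "\<And>x. x \<in> Z \<Longrightarrow> succ x \<in> Z" "\<And>x. x \<in> Z \<Longrightarrow> x \<lessdot> succ x"
    "\<And>x t. x \<in> Z \<Longrightarrow> t \<in> Z \<Longrightarrow> x \<lessdot> t \<Longrightarrow> t = succ x \<or> succ x \<lessdot> t"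
    using well_ordered_successor[OF assms(1) unbounded] by metis
  have "succ x \<noteq> succ x'" if "x \<in> Z" "x' \<in> Z" "x \<lessdot> x'" for x x'
  proof -
    have "x' \<lessdot> succ x'" using succ(2) that(2) .
    moreover have "x' = succ x \<or> succ x \<lessdot> x'" using succ(3) that .
    ultimately show ?thesis using asym irrefl by metis
  qed
  then have "inj_on succ Z"
    using total unfolding inj_on_def by metis
  then have "uncountable (succ ` Z)"
    using assms(2) countable_image_inj_on by blast
  moreover have "\<exists>a b. a \<lessdot> d \<and> d \<lessdot> b \<and> (\<forall>y\<in>succ ` Z. a \<lessdot> y \<and> y \<lessdot> b \<longrightarrow> y = d)"
    if d: "d \<in> succ ` Z" for d
  proof -
    obtain x where x: "x \<in> Z" "d = succ x" using d by blast
    then have "d \<in> Z" using succ(1) by blast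
    have "y = d" if "y \<in> succ ` Z" "x \<lessdot> y" "y \<lessdot> succ d" for y
    proof -
      have "y \<in> Z" using that(1) succ(1) by blast
      then have "y = d \<or> d \<lessdot> y" using succ(3)[OF x(1) _ that(2)] x(2) by blast
      moreover have "\<not> d \<lessdot> y"
      proof
        assume "d \<lessdot> y"
        then have "y = succ d \<or> succ d \<lessdot> y" using succ(3) \<open>d \<in> Z\<close> \<open>y \<in> Z\<close> by blast
        then show False using that(3) irrefl asym by blast
      qed
      ultimately show ?thesis by blast
    qed
    then show ?thesis using succ(2)[OF x(1)] succ(2)[OF \<open>d \<in> Z\<close>] x(2) by blast
  qed
  ultimately show thesis by (rule that)
qed

lemma exists_unbounded_well_ordered_if_uncountably_many_countable_lower_rays:
  assumes "uncountable {r. countable {x. x \<lessdot> r}}"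
  obtains Z where "well_ordered Z" "uncountable Z" "\<And>x. x \<in> Z \<Longrightarrow> \<exists>y\<in>Z. x \<lessdot> y"
proof -
  define A where "A = {r. countable {x. x \<lessdot> r}}"
  have "uncountable A" using assms unfolding A_def .
  have "\<exists>z\<in>A - S. \<forall>s\<in>S. s \<lessdot> z" if S: "countable S" "S \<subseteq> A" for S
  proof -
    have "countable ((\<Union>s\<in>S. {x. x \<lessdot> s}) \<union> S)"
      using S unfolding A_def by auto
    then have "\<not> A \<subseteq> (\<Union>s\<in>S. {x. x \<lessdot> s}) \<union> S"
      using \<open>uncountable A\<close> countable_subset by blast
    then obtain z where z: "z \<in> A" "z \<notin> (\<Union>s\<in>S. {x. x \<lessdot> s}) \<union> S" by blast
    have "s \<lessdot> z" if "s \<in> S" for s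
      using total[of s z] z(2) that by blast
    then show ?thesis using z by blast
  qed
  then obtain Z where Z: "Z \<subseteq> A" "well_ordered Z" "uncountable Z"
    by (rule exists_uncountable_well_ordered)
  have "\<exists>y\<in>Z. x \<lessdot> y" if x: "x \<in> Z" for x
  proof -
    have "countable (insert x {y. y \<lessdot> x})" using x Z(1) unfolding A_def by auto
    then have "\<not> Z \<subseteq> insert x {y. y \<lessdot> x}" using Z(3) countable_subset by blast
    then obtain y where "y \<in> Z" "y \<noteq> x" "\<not> y \<lessdot> x" by blast
    then show ?thesis using total by blast
  qed
  with Z(2,3) show thesis by (rule that)
qed

lemma open_split_if_uncountably_many_countable_lower_rays:
  assumes lower_open: "\<And>r. openin T {x. x \<lessdot> r}"
    and upper_open: "\<And>r. openin T {x. r \<lessdot> x}"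
    and "uncountable {r. countable {x. x \<lessdot> r}}"
  obtains U where "openin T U" "uncountable U" "uncountable (topspace T - U)"
proof -
  obtain Z where "well_ordered Z" "uncountable Z" "\<And>x. x \<in> Z \<Longrightarrow> \<exists>y\<in>Z. x \<lessdot> y"
    using exists_unbounded_well_ordered_if_uncountably_many_countable_lower_rays[OF assms(3)]
    by metis
  then obtain D where D: "uncountable D"
    "\<And>d. d \<in> D \<Longrightarrow> \<exists>a b. a \<lessdot> d \<and> d \<lessdot> b \<and> (\<forall>y\<in>D. a \<lessdot> y \<and> y \<lessdot> b \<longrightarrow> y = d)"
    using well_ordered_isolated_subset by metis
  have isolated: "\<exists>U. openin T U \<and> U \<inter> D = {d}" if d: "d \<in> D" for d
  proof -
    obtain a b where ab: "a \<lessdot> d" "d \<lessdot> b" "\<forall>y\<in>D. a \<lessdot> y \<and> y \<lessdot> b \<longrightarrow> y = d"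
      using D(2)[OF d] by blast
    have "openin T ({x. a \<lessdot> x} \<inter> {x. x \<lessdot> b})"
      using lower_open upper_open by blast
    moreover have "({x. a \<lessdot> x} \<inter> {x. x \<lessdot> b}) \<inter> D = {d}"
      using ab d by blast
    ultimately show ?thesis by blast
  qed
  show thesis
  proof (rule uncountable_isolated_imp_open_split[OF D(1)])
    show "\<And>d. d \<in> D \<Longrightarrow> \<exists>U. openin T U \<and> U \<inter> D = {d}" by (fact isolated)
  qed (rule that)
qed

lemma open_split:
  assumes lower_open: "\<And>r. openin T {x. x \<lessdot> r}"
    and upper_open: "\<And>r. openin T {x. r \<lessdot> x}"
    and "uncountable (UNIV :: 'a set)"
  obtains U where "openin T U" "uncountable U" "uncountable (topspace T - U)"
proof (cases "uncountable {r. countable {x. x \<lessdot> r}}")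
  case True
  show thesis
    by (rule open_split_if_uncountably_many_countable_lower_rays[OF lower_open upper_open True])
      (rule that)
next
  case False
  show thesis
  proof (cases "\<exists>r. uncountable {x. x \<lessdot> r} \<and> uncountable (topspace T - {x. x \<lessdot> r})")
    case True
    then obtain r where "uncountable {x. x \<lessdot> r}" "uncountable (topspace T - {x. x \<lessdot> r})"
      by blast
    with lower_open show thesis by (rule that)
  next
    case no_split: False
    have "- {r. countable {x. x \<lessdot> r}} \<subseteq> {r. countable {x. r \<lessdot> x}}"
    proof
      fix r assume "r \<in> - {r. countable {x. x \<lessdot> r}}"
      then have "countable (topspace T - {x. x \<lessdot> r})" using no_split by blast
      moreover have "{x. r \<lessdot> x} \<subseteq> topspace T - {x. x \<lessdot> r}"
        using openin_subset[OF upper_open] asym by blast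
      ultimately show "r \<in> {r. countable {x. r \<lessdot> x}}" using countable_subset by blast
    qed
    moreover have "uncountable (- {r. countable {x. x \<lessdot> r}})"
      using False assms(3) by (metis Compl_partition countable_Un_iff)
    ultimately have "uncountable {r. countable {x. r \<lessdot> x}}"
      using countable_subset by blast
    show thesis
      by (rule tournament.open_split_if_uncountably_many_countable_lower_rays[OF dual
            upper_open lower_open \<open>uncountable {r. countable {x. r \<lessdot> x}}\<close>])
        (rule that)
  qed
qed

end

lemma tournament_sel_less:
  assumes "two_point_selection f"
  shows "tournament (sel_less f)"
proof
  fix x y :: real
  show "sel_less f x y \<or> sel_less f y x" if "x \<noteq> y"
  proof -
    have "f {x, y} \<in> {x, y}" using assms that unfolding two_point_selection_def by blast
    then show ?thesis using that unfolding sel_less_def by (auto simp: insert_commute)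
  qed
  show "\<not> sel_less f y x" if "sel_less f x y"
    using that unfolding sel_less_def by (auto simp: insert_commute)
qed

lemma openin_sel_topology_rays:
  shows "openin (sel_topology f) {x. sel_less f x r}"
    and "openin (sel_topology f) {x. sel_less f r x}"
  unfolding sel_topology_def
  by (rule topology_generated_by_Basis, auto simp: sel_subbase_def)+

theorem theorem3p8:
  fixes f :: "real set \<Rightarrow> real"
  assumes "two_point_selection f"
  shows "countable_cocountable \<noteq> sel_borel f"
proof
  assume eq: "countable_cocountable = sel_borel f"
  obtain U where U: "openin (sel_topology f) U" "uncountable U"
    "uncountable (topspace (sel_topology f) - U)"
    by (rule tournament.open_split[OF tournament_sel_less[OF assms]
          openin_sel_topology_rays uncountable_UNIV_real])
  have "U \<in> sel_borel f"
    unfolding sel_borel_def by (rule sigma_sets.Basic) (use U(1) in simp)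
  then have "countable U \<or> countable (UNIV - U)"
    using eq unfolding countable_cocountable_def by blast
  moreover have "topspace (sel_topology f) - U \<subseteq> UNIV - U" by blast
  ultimately show False
    using U(2,3) countable_subset by blast
qed

end
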